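(* The functors $\mathcal O:\mathbf{MT_P}\to\mathbf{Frm}$ (sending $M$ to its frame $\mathcal O M$ of open elements and a proximity morphism $f$ to $f|_{\mathcal O M}$) and $\mathcal F:\mathbf{Frm}\to\mathbf{MT_P}$ (sending a frame $L$ to its Funayama envelope $\mathcal F L$ and a frame morphism $h:L_1\to L_2$ to $\mathcal F h$) are well-defined functors that establish an equivalence of categories between $\mathbf{MT_P}$ and $\mathbf{Frm}$.
   Context: An MT-algebra is a pair $(M,\square)$ where $M$ is a complete boolean algebra and $\square:M\to M$ satisfies $\square 1=1$, $\square(a\wedge b)=\square a\wedge\square b$, $\square a\le a$, $\square a\le\square\square a$; $\Diamond a=\neg\square\neg a$; open: $\square a=a$; locally closed: $a=\square b\wedge\Diamond c$; $\mathcal O M$, $\mathcal{LC}M$ the sets of open and locally closed elements ($\mathcal O M$ is a frame). A proximity morphism $f:M\to N$ is a map with (P1) $f|_{\mathcal O M}:\mathcal O M\to\mathcal O N$ a frame morphism; (P2) $f(a\wedge b)=f(a)\wedge f(b)$; (P3) $f(\bigvee S)=\bigvee f[S]$ for finite $S\subseteq\mathcal{LC}M$; (P4) $f(a)=\bigvee\{f(x):x\in\mathcal{LC}M, x\le a\}$. $\mathbf{MT_P}$ is the category of MT-algebras and proximity morphisms with composition $(g\star f)(a)=\bigvee\{g(f(x)):x\in\mathcal{LC}M_1,x\le a\}$ and identities $1_M(a)=\bigvee\{x\in\mathcal{LC}M:x\le a\}$. $\mathbf{Frm}$ is the category of frames and frame morphisms. For a frame $L$, $\mathcal B L$ denotes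 its boolean envelope (free boolean extension: a boolean algebra containing $L$ as a bounded sublattice generating it, such that every bounded lattice homomorphism from $L$ into a boolean algebra extends uniquely to a boolean homomorphism); the inclusion $L\hookrightarrow\mathcal BL$ has a right adjoint $\square:\mathcal BL\to L$. Let $\overline{\mathcal BL}$ be the MacNeille completion of $\mathcal BL$ and $\overline\square a=\bigvee\{\square b: b\in\mathcal BL, b\le a\}$. The Funayama envelope is the MT-algebra $\mathcal F L=(\overline{\mathcal BL},\overline\square)$; its open elements are exactly $L$. For a frame morphism $h:L_1\to L_2$, $\mathcal Bh:\mathcal BL_1\to\mathcal BL_2$ is its unique boolean extension and $\mathcal Fh(a)=\bigvee\{\mathcal Bh(b): b\in\mathcal BL_1, b\le a\}$. *)

theory Defs
  imports Main
begin

text \<open>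
  A complete boolean algebra is a type of sort
  {complete_lattice, boolean_algebra}.  (The library class complete_boolean_algebra
  additionally demands complete distributivity and is therefore NOT used.)
  A frame is represented by a carrier set L inside a complete lattice type, closed
  under arbitrary joins, binary meets and containing top, and satisfying the frame
  distributive law; its joins and finite meets are those of the ambient lattice.
  Every frame is of this form (take the frame itself as the type and L = UNIV).
\<close>

definition frame_on :: "'a::complete_lattice set \<Rightarrow> bool" where
  "frame_on L \<longleftrightarrow>
     (\<forall>S. S \<subseteq> L \<longrightarrow> Sup S \<in> L) \<and> top \<in> L \<and>
     (\<forall>a\<in>L. \<forall>b\<in>L. inf a b \<in> L) \<and>
     (\<forall>a\<in>L. \<forall>S. S \<subseteq> L \<longrightarrow> inf a (Sup S) = Sup ((inf a) ` S))"

definition frame_hom ::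
  "'a::complete_lattice set \<Rightarrow> 'b::complete_lattice set \<Rightarrow> ('a \<Rightarrow> 'b) \<Rightarrow> bool" where
  "frame_hom L1 L2 h \<longleftrightarrow>
     (\<forall>x\<in>L1. h x \<in> L2) \<and> h top = top \<and>
     (\<forall>a\<in>L1. \<forall>b\<in>L1. h (inf a b) = inf (h a) (h b)) \<and>
     (\<forall>S. S \<subseteq> L1 \<longrightarrow> h (Sup S) = Sup (h ` S))"

definition frame_iso ::
  "'a::complete_lattice set \<Rightarrow> 'b::complete_lattice set \<Rightarrow> ('a \<Rightarrow> 'b) \<Rightarrow> bool" where
  "frame_iso L1 L2 h \<longleftrightarrow> frame_hom L1 L2 h \<and> bij_betw h L1 L2"

definition MT_algebra :: "('m::{complete_lattice,boolean_algebra} \<Rightarrow> 'm) \<Rightarrow> bool" where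
  "MT_algebra box \<longleftrightarrow>
     box top = top \<and>
     (\<forall>a b. box (inf a b) = inf (box a) (box b)) \<and>
     (\<forall>a. box a \<le> a) \<and>
     (\<forall>a. box a \<le> box (box a))"

definition dia :: "('m::{complete_lattice,boolean_algebra} \<Rightarrow> 'm) \<Rightarrow> 'm \<Rightarrow> 'm" where
  "dia box a = - box (- a)"

definition opens :: "('m::{complete_lattice,boolean_algebra} \<Rightarrow> 'm) \<Rightarrow> 'm set" where
  "opens box = {a. box a = a}"

definition LC :: "('m::{complete_lattice,boolean_algebra} \<Rightarrow> 'm) \<Rightarrow> 'm set" where
  "LC box = {a. \<exists>b c. a = inf (box b) (dia box c)}"

definition proximity ::
  "('m::{complete_lattice,boolean_algebra} \<Rightarrow> 'm) \<Rightarrow>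
   ('n::{complete_lattice,boolean_algebra} \<Rightarrow> 'n) \<Rightarrow> ('m \<Rightarrow> 'n) \<Rightarrow> bool" where
  "proximity box1 box2 f \<longleftrightarrow>
     frame_hom (opens box1) (opens box2) f \<and>
     (\<forall>a b. f (inf a b) = inf (f a) (f b)) \<and>
     (\<forall>S. finite S \<and> S \<subseteq> LC box1 \<longrightarrow> f (Sup S) = Sup (f ` S)) \<and>
     (\<forall>a. f a = Sup {f x | x. x \<in> LC box1 \<and> x \<le> a})"

text \<open>Composition g \<star> f (f : M1 \<rightarrow> M2, g : M2 \<rightarrow> M3; box1 is the modal operator of M1)
  and identities in the category MT_P.\<close>
definition compP ::
  "('m::{complete_lattice,boolean_algebra} \<Rightarrow> 'm) \<Rightarrow> ('n \<Rightarrow> 'k::complete_lattice) \<Rightarrow> ('m \<Rightarrow> 'n)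
   \<Rightarrow> 'm \<Rightarrow> 'k" where
  "compP box1 g f a = Sup {g (f x) | x. x \<in> LC box1 \<and> x \<le> a}"

definition idP :: "('m::{complete_lattice,boolean_algebra} \<Rightarrow> 'm) \<Rightarrow> 'm \<Rightarrow> 'm" where
  "idP box a = Sup {x. x \<in> LC box \<and> x \<le> a}"

definition bool_closed :: "'c::boolean_algebra set \<Rightarrow> bool" where
  "bool_closed B \<longleftrightarrow> top \<in> B \<and> bot \<in> B \<and>
     (\<forall>a\<in>B. \<forall>b\<in>B. inf a b \<in> B \<and> sup a b \<in> B) \<and> (\<forall>a\<in>B. - a \<in> B)"

definition bool_gen :: "'c::boolean_algebra set \<Rightarrow> 'c set" where
  "bool_gen X = \<Inter>{B. X \<subseteq> B \<and> bool_closed B}"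

text \<open>The boolean envelope of the frame L, realised inside 'c via the embedding e:
  the boolean subalgebra generated by the bounded sublattice e ` L.\<close>
definition benv :: "'a set \<Rightarrow> ('a \<Rightarrow> 'c::boolean_algebra) \<Rightarrow> 'c set" where
  "benv L e = bool_gen (e ` L)"

text \<open>funayama_data L e: the complete boolean algebra 'c together with e is the
  MacNeille completion of the boolean envelope of L: e embeds L as a bounded
  sublattice (injective bounded lattice homomorphism), which generates the boolean
  subalgebra benv L e, and benv L e is join-dense and meet-dense in 'c.\<close>
definition funayama_data ::
  "'a::complete_lattice set \<Rightarrow> ('a \<Rightarrow> 'c::{complete_lattice,boolean_algebra}) \<Rightarrow> bool" where
  "funayama_data L e \<longleftrightarrow>
     inj_on e L \<and> e top = top \<and> e bot = bot \<and>
     (\<forall>a\<in>L. \<forall>b\<in>L. e (inf a b) = inf (e a) (e b) \<and> e (sup a b) = sup (e a) (e b)) \<and>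
     (\<forall>x. x = Sup {b \<in> benv L e. b \<le> x}) \<and>
     (\<forall>x. x = Inf {b \<in> benv L e. x \<le> b})"

definition radj :: "'a::complete_lattice set \<Rightarrow> ('a \<Rightarrow> 'c::boolean_algebra) \<Rightarrow> 'c \<Rightarrow> 'a" where
  "radj L e b = (THE x. x \<in> L \<and> e x \<le> b \<and> (\<forall>y\<in>L. e y \<le> b \<longrightarrow> y \<le> x))"

definition funbox ::
  "'a::complete_lattice set \<Rightarrow> ('a \<Rightarrow> 'c::{complete_lattice,boolean_algebra}) \<Rightarrow> 'c \<Rightarrow> 'c" where
  "funbox L e a = Sup {e (radj L e b) | b. b \<in> benv L e \<and> b \<le> a}"

definition bool_hom_on :: "'c::boolean_algebra set \<Rightarrow> ('c \<Rightarrow> 'd::boolean_algebra) \<Rightarrow> bool" where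
  "bool_hom_on B g \<longleftrightarrow> g top = top \<and> g bot = bot \<and>
     (\<forall>a\<in>B. \<forall>b\<in>B. g (inf a b) = inf (g a) (g b) \<and> g (sup a b) = sup (g a) (g b)) \<and>
     (\<forall>a\<in>B. g (- a) = - g a)"

definition Bmor ::
  "'a::complete_lattice set \<Rightarrow> ('a \<Rightarrow> 'c::boolean_algebra) \<Rightarrow>
   ('b \<Rightarrow> 'd::boolean_algebra) \<Rightarrow> ('a \<Rightarrow> 'b) \<Rightarrow> 'c \<Rightarrow> 'd" where
  "Bmor L1 e1 e2 h = (SOME g. bool_hom_on (benv L1 e1) g \<and> (\<forall>x\<in>L1. g (e1 x) = e2 (h x)))"

definition Fmor ::
  "'a::complete_lattice set \<Rightarrow> ('a \<Rightarrow> 'c::{complete_lattice,boolean_algebra}) \<Rightarrow>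
   ('b \<Rightarrow> 'd::{complete_lattice,boolean_algebra}) \<Rightarrow> ('a \<Rightarrow> 'b) \<Rightarrow> 'c \<Rightarrow> 'd" where
  "Fmor L1 e1 e2 h a = Sup {Bmor L1 e1 e2 h b | b. b \<in> benv L1 e1 \<and> b \<le> a}"

end

theory Submission
  imports Defs
begin

text \<open>A proximity morphism is determined by its values on the locally closed elements u - v
  (u, v open), and it sends u - v to f u - f v. Conversely a frame morphism h induces the
  proximity morphism u - v \<mapsto> h u - h v. It is well defined because whether u - v lies below
  a finite join of such differences is decided by inequalities between elements of the frame,
  which h preserves. By Funayama's theorem the frame L
  embeds into the completion of its boolean envelope preserving all joins, which identifies L with
  the opens of F L; and for an MT-algebra M the proximity morphisms between M and F (O M) induced
  by the identity of O M are mutually inverse.\<close>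

lemma inf_Sup_boolean:
  fixes a :: "'a::{complete_lattice,boolean_algebra}"
  shows "inf a (Sup S) = Sup ((inf a) ` S)"
proof (rule antisym)
  have "Sup S \<le> sup (- a) (Sup ((inf a) ` S))"
  proof (rule Sup_least)
    fix s assume "s \<in> S"
    hence "inf a s \<le> Sup ((inf a) ` S)" by (rule SUP_upper)
    thus "s \<le> sup (- a) (Sup ((inf a) ` S))" by (simp add: shunt1[symmetric] inf.commute)
  qed
  thus "inf a (Sup S) \<le> Sup ((inf a) ` S)" by (simp add: shunt1[symmetric] inf.commute)
  show "Sup ((inf a) ` S) \<le> inf a (Sup S)"
    by (rule SUP_least) (simp add: Sup_upper le_infI2)
qed

lemma inf_Sup_Sup_boolean:
  fixes f :: "'b \<Rightarrow> 'a::{complete_lattice,boolean_algebra}"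
  shows "inf (Sup (f ` P)) (Sup (g ` Q)) = Sup ((\<lambda>(p,q). inf (f p) (g q)) ` (P \<times> Q))"
proof -
  have "inf (Sup (f ` P)) (Sup (g ` Q)) = (SUP p\<in>P. inf (f p) (Sup (g ` Q)))"
    using inf_Sup_boolean[of "Sup (g ` Q)" "f ` P"] by (simp add: inf.commute image_image)
  also have "\<dots> = (SUP p\<in>P. SUP q\<in>Q. inf (f p) (g q))"
    by (simp add: inf_Sup_boolean image_image)
  also have "\<dots> = Sup ((\<lambda>(p,q). inf (f p) (g q)) ` (P \<times> Q))"
    by (rule antisym) (auto intro!: SUP_least intro: SUP_upper2)
  finally show ?thesis .
qed

lemma diff_le_sup_diff_iff:
  fixes x :: "'a::boolean_algebra"
  shows "inf x (- y) \<le> sup (inf a (- c)) R \<longleftrightarrow>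
         inf x (- sup y a) \<le> R \<and> inf (inf x c) (- y) \<le> R"
proof -
  have "inf x (- y) \<le> sup (inf a (- c)) R \<longleftrightarrow> inf (inf x (- y)) (- inf a (- c)) \<le> R"
    by (rule shunt2[symmetric])
  also have "inf (inf x (- y)) (- inf a (- c)) = sup (inf x (- sup y a)) (inf (inf x c) (- y))"
    by (simp add: inf_sup_distrib1 inf_sup_aci)
  finally show ?thesis by simp
qed

section \<open>MT-algebras and proximity morphisms\<close>

lemma MT_algebraD:
  assumes "MT_algebra box"
  shows "box top = top" "box (inf a b) = inf (box a) (box b)" "box a \<le> a"
    "box (box a) = box a" "a \<le> b \<Longrightarrow> box a \<le> box b"
proof -
  show "box top = top" "box (inf a b) = inf (box a) (box b)" "box a \<le> a"
    using assms by (auto simp: MT_algebra_def)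
  show "box (box a) = box a" using assms unfolding MT_algebra_def by (metis antisym)
  show "a \<le> b \<Longrightarrow> box a \<le> box b" using assms unfolding MT_algebra_def
    by (metis inf.absorb_iff2)
qed

lemma opens_frame:
  assumes "MT_algebra box"
  shows "frame_on (opens box)"
proof -
  note M = MT_algebraD[OF assms]
  have "Sup S \<in> opens box" if "S \<subseteq> opens box" for S
  proof -
    have "Sup S \<le> box (Sup S)"
    proof (rule Sup_least)
      fix s assume "s \<in> S"
      hence "s = box s" using that by (auto simp: opens_def)
      also have "\<dots> \<le> box (Sup S)" using M(5) \<open>s \<in> S\<close> by (simp add: Sup_upper)
      finally show "s \<le> box (Sup S)" .
    qed
    thus ?thesis using M(3) by (simp add: opens_def antisym)
  qed
  thus ?thesis using M(1,2) unfolding frame_on_def opens_def by (simp add: inf_Sup_boolean)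
qed

lemma bot_opens: "MT_algebra box \<Longrightarrow> bot \<in> opens box"
  using MT_algebraD(3)[of box bot] by (simp add: opens_def bot_unique)

lemma LC_eq_opens_diff:
  assumes "MT_algebra box"
  shows "LC box = {inf u (- v) | u v. u \<in> opens box \<and> v \<in> opens box}"
proof (intro set_eqI iffI)
  fix x assume "x \<in> LC box"
  then obtain b c where "x = inf (box b) (- box (- c))" by (auto simp: LC_def dia_def)
  thus "x \<in> {inf u (- v) | u v. u \<in> opens box \<and> v \<in> opens box}"
    using MT_algebraD(4)[OF assms] unfolding opens_def by blast
next
  fix x assume "x \<in> {inf u (- v) | u v. u \<in> opens box \<and> v \<in> opens box}"
  then obtain u v where "x = inf u (- v)" "box u = u" "box v = v" by (auto simp: opens_def)
  hence "x = inf (box u) (dia box (- v))" by (simp add: dia_def)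
  thus "x \<in> LC box" by (auto simp: LC_def)
qed

lemma opens_subset_LC:
  assumes "MT_algebra box" "u \<in> opens box"
  shows "u \<in> LC box" "- u \<in> LC box"
proof -
  have "top \<in> opens box" using MT_algebraD(1)[OF assms(1)] by (simp add: opens_def)
  moreover have "u = inf u (- bot)" "- u = inf top (- u)" by simp_all
  ultimately show "u \<in> LC box" "- u \<in> LC box"
    using assms bot_opens unfolding LC_eq_opens_diff[OF assms(1)] by blast+
qed

lemma proximityD:
  assumes "proximity box1 box2 f"
  shows "frame_hom (opens box1) (opens box2) f" "f (inf a b) = inf (f a) (f b)"
    "finite S \<Longrightarrow> S \<subseteq> LC box1 \<Longrightarrow> f (Sup S) = Sup (f ` S)"
    "f a = Sup {f x | x. x \<in> LC box1 \<and> x \<le> a}"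
  using assms unfolding proximity_def by blast+

lemma proximity_mono:
  assumes "proximity box1 box2 f" "a \<le> b"
  shows "f a \<le> f b"
  by (metis assms inf.absorb1 inf.cobounded2 proximityD(2))

lemma proximity_compl_open:
  assumes "MT_algebra box1" "proximity box1 box2 f" "u \<in> opens box1"
  shows "f (- u) = - f u"
proof (rule compl_unique[symmetric])
  have fh: "frame_hom (opens box1) (opens box2) f" by (rule proximityD(1)[OF assms(2)])
  have "f bot = bot" using fh bot_opens[OF assms(1)] unfolding frame_hom_def
    by (metis Sup_empty empty_subsetI image_empty)
  thus "inf (f u) (f (- u)) = bot" by (simp flip: proximityD(2)[OF assms(2)])
  have "f (Sup {u, - u}) = Sup (f ` {u, - u})"
    by (rule proximityD(3)[OF assms(2)]) (use opens_subset_LC[OF assms(1,3)] in auto)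
  thus "sup (f u) (f (- u)) = top" using fh by (simp add: frame_hom_def)
qed

lemma proximity_diff_open:
  assumes "MT_algebra box1" "proximity box1 box2 f" "u \<in> opens box1" "v \<in> opens box1"
  shows "f (inf u (- v)) = inf (f u) (- f v)"
  using assms proximityD(2) proximity_compl_open by metis

definition bounded_sublattice :: "'a::bounded_lattice set \<Rightarrow> bool" where
  "bounded_sublattice L \<longleftrightarrow> top \<in> L \<and> bot \<in> L \<and> (\<forall>a\<in>L. \<forall>b\<in>L. inf a b \<in> L \<and> sup a b \<in> L)"

definition lattice_hom_on :: "'a::bounded_lattice set \<Rightarrow> ('a \<Rightarrow> 'b::bounded_lattice) \<Rightarrow> bool" where
  "lattice_hom_on L e \<longleftrightarrow> e top = top \<and> e bot = bot \<and>
     (\<forall>a\<in>L. \<forall>b\<in>L. e (inf a b) = inf (e a) (e b) \<and> e (sup a b) = sup (e a) (e b))"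

definition order_embedding_on :: "'a::order set \<Rightarrow> ('a \<Rightarrow> 'b::order) \<Rightarrow> bool" where
  "order_embedding_on L e \<longleftrightarrow> (\<forall>a\<in>L. \<forall>b\<in>L. e a \<le> e b \<longleftrightarrow> a \<le> b)"

definition lc_pair :: "('x \<Rightarrow> 'c::boolean_algebra) \<Rightarrow> 'x \<times> 'x \<Rightarrow> 'c" where
  "lc_pair e p = inf (e (fst p)) (- e (snd p))"

definition meet_pair :: "'x::lattice \<times> 'x \<Rightarrow> 'x \<times> 'x \<Rightarrow> 'x \<times> 'x" where
  "meet_pair p q = (inf (fst p) (fst q), sup (snd p) (snd q))"

lemma lattice_hom_on_mono:
  "lattice_hom_on L e \<Longrightarrow> a \<in> L \<Longrightarrow> b \<in> L \<Longrightarrow> a \<le> b \<Longrightarrow> e a \<le> e b"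
  unfolding lattice_hom_on_def by (metis inf.absorb_iff1)

lemma frame_bounded_sublattice: "frame_on L \<Longrightarrow> bounded_sublattice L"
  unfolding frame_on_def bounded_sublattice_def
  by (metis Sup_empty Sup_insert empty_subsetI insert_subset sup_bot.right_neutral)

lemma frame_hom_lattice_hom:
  assumes "frame_on L1" "frame_hom L1 L2 h"
  shows "lattice_hom_on L1 h"
proof -
  have Sup: "\<And>S. S \<subseteq> L1 \<Longrightarrow> h (Sup S) = Sup (h ` S)" using assms(2) by (simp add: frame_hom_def)
  have "h (Sup {}) = Sup (h ` {})" by (rule Sup) simp
  moreover have "h (Sup {a, b}) = Sup (h ` {a, b})" if "a \<in> L1" "b \<in> L1" for a b
    using that by (intro Sup) auto
  ultimately show ?thesis using assms(2) unfolding lattice_hom_on_def frame_hom_def by auto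
qed

lemma lc_pair_meet_pair:
  assumes "lattice_hom_on L e" "p \<in> L \<times> L" "q \<in> L \<times> L"
  shows "lc_pair e (meet_pair p q) = inf (lc_pair e p) (lc_pair e q)"
  using assms unfolding lattice_hom_on_def lc_pair_def meet_pair_def by (auto simp: inf_aci)

lemma map_prod_meet_pair:
  assumes "lattice_hom_on L h" "p \<in> L \<times> L" "q \<in> L \<times> L"
  shows "map_prod h h (meet_pair p q) = meet_pair (map_prod h h p) (map_prod h h q)"
  using assms unfolding lattice_hom_on_def meet_pair_def by (cases p, cases q) auto

lemma meet_pair_closed:
  "bounded_sublattice L \<Longrightarrow> p \<in> L \<times> L \<Longrightarrow> q \<in> L \<times> L \<Longrightarrow> meet_pair p q \<in> L \<times> L"
  unfolding bounded_sublattice_def meet_pair_def by (auto simp: mem_Times_iff)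

lemma lc_pair_bot:
  "lattice_hom_on L e \<Longrightarrow> lc_pair e (u, bot) = e u"
  by (simp add: lattice_hom_on_def lc_pair_def)

lemma lc_pair_le_sup_iff:
  assumes "lattice_hom_on L e" "x \<in> L" "y \<in> L" "a \<in> L" "c \<in> L"
  shows "lc_pair e (x, y) \<le> sup (lc_pair e (a, c)) R \<longleftrightarrow>
         lc_pair e (x, sup y a) \<le> R \<and> lc_pair e (inf x c, y) \<le> R"
  using assms diff_le_sup_diff_iff[of "e x" "e y" "e a" "e c" R]
  by (simp add: lc_pair_def lattice_hom_on_def)

context
  fixes L1 :: "'x::bounded_lattice set" and e1 :: "'x \<Rightarrow> 'c::{complete_lattice,boolean_algebra}"
    and L2 :: "'y::bounded_lattice set" and e2 :: "'y \<Rightarrow> 'd::{complete_lattice,boolean_algebra}"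
    and h :: "'x \<Rightarrow> 'y"
  assumes L1: "bounded_sublattice L1" and e1: "lattice_hom_on L1 e1" "order_embedding_on L1 e1"
    and h: "lattice_hom_on L1 h" "h ` L1 \<subseteq> L2" and e2: "lattice_hom_on L2 e2"
begin

text \<open>This is what makes the boolean extension of h well defined: peeling off one piece of the
  cover at a time by shunting, an inclusion between finite joins of locally closed pieces is
  reduced to inequalities between lattice elements, which h preserves.\<close>

lemma lc_pair_le_Sup_transfer:
  assumes "finite Q" "Q \<subseteq> L1 \<times> L1" "x \<in> L1" "y \<in> L1"
    and "lc_pair e1 (x, y) \<le> Sup (lc_pair e1 ` Q)"
  shows "lc_pair e2 (h x, h y) \<le> Sup (lc_pair e2 ` map_prod h h ` Q)"
  using assms
proof (induction Q arbitrary: x y rule: finite_induct)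
  case empty
  hence "x \<le> y" using e1(2) by (simp add: lc_pair_def inf_shunt bot_unique order_embedding_on_def)
  hence "e2 (h x) \<le> e2 (h y)"
    using empty lattice_hom_on_mono[OF h(1)] lattice_hom_on_mono[OF e2] h(2) by blast
  thus ?case by (simp add: lc_pair_def inf_shunt bot_unique)
next
  case (insert q Q)
  obtain a c where q: "q = (a, c)" "a \<in> L1" "c \<in> L1" using insert.prems by (cases q) auto
  let ?R1 = "Sup (lc_pair e1 ` Q)" and ?R2 = "Sup (lc_pair e2 ` map_prod h h ` Q)"
  have closed: "sup y a \<in> L1" "inf x c \<in> L1"
    using L1 q insert.prems unfolding bounded_sublattice_def by auto
  have "lc_pair e1 (x, sup y a) \<le> ?R1 \<and> lc_pair e1 (inf x c, y) \<le> ?R1"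
    using insert.prems(4) lc_pair_le_sup_iff[OF e1(1) insert.prems(2,3) q(2,3)] q(1) by simp
  hence "lc_pair e2 (h x, h (sup y a)) \<le> ?R2 \<and> lc_pair e2 (h (inf x c), h y) \<le> ?R2"
    using insert.IH insert.prems closed by auto
  moreover have "h (sup y a) = sup (h y) (h a)" "h (inf x c) = inf (h x) (h c)"
    using h(1) q insert.prems by (auto simp: lattice_hom_on_def)
  moreover have "h x \<in> L2" "h y \<in> L2" "h a \<in> L2" "h c \<in> L2"
    using h(2) q insert.prems by auto
  ultimately show ?case using lc_pair_le_sup_iff[OF e2] q(1) by simp
qed

lemma Sup_lc_pair_le_transfer:
  assumes "finite Q" "Q \<subseteq> L1 \<times> L1" "P \<subseteq> L1 \<times> L1"
    and "Sup (lc_pair e1 ` P) \<le> Sup (lc_pair e1 ` Q)"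
  shows "Sup (lc_pair e2 ` map_prod h h ` P) \<le> Sup (lc_pair e2 ` map_prod h h ` Q)"
proof (rule SUP_least)
  fix p' assume "p' \<in> map_prod h h ` P"
  then obtain x y where "(x, y) \<in> P" "p' = (h x, h y)" by auto
  moreover have "lc_pair e1 (x, y) \<le> Sup (lc_pair e1 ` Q)"
    using assms(4) \<open>(x, y) \<in> P\<close> by (metis SUP_upper order_trans)
  ultimately show "lc_pair e2 p' \<le> Sup (lc_pair e2 ` map_prod h h ` Q)"
    using lc_pair_le_Sup_transfer assms(1-3) by auto
qed

end

section \<open>The boolean envelope as finite joins of locally closed pieces\<close>

lemma bool_gen_closed: "bool_closed (bool_gen X)" "X \<subseteq> bool_gen X"
  unfolding bool_gen_def bool_closed_def by auto

lemma bool_gen_least: "X \<subseteq> B \<Longrightarrow> bool_closed B \<Longrightarrow> bool_gen X \<subseteq> B"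
  unfolding bool_gen_def by auto

definition lc_joins :: "'x set \<Rightarrow> ('x \<Rightarrow> 'c::{complete_lattice,boolean_algebra}) \<Rightarrow> 'c set" where
  "lc_joins L e = {Sup (lc_pair e ` P) | P. finite P \<and> P \<subseteq> L \<times> L}"

lemma Sup_lc_pair_meet_pair:
  fixes e :: "'x::bounded_lattice \<Rightarrow> 'c::{complete_lattice,boolean_algebra}"
  assumes "lattice_hom_on L e" "P \<subseteq> L \<times> L" "Q \<subseteq> L \<times> L"
  shows "inf (Sup (lc_pair e ` P)) (Sup (lc_pair e ` Q))
       = Sup (lc_pair e ` case_prod meet_pair ` (P \<times> Q))"
proof -
  have "inf (lc_pair e p) (lc_pair e q) = lc_pair e (meet_pair p q)" if "p \<in> P" "q \<in> Q" for p q
    using lc_pair_meet_pair[OF assms(1), of p q] that assms(2,3) by (metis subsetD)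
  thus ?thesis unfolding inf_Sup_Sup_boolean image_image
    by (auto intro!: arg_cong[where f = Sup] image_cong)
qed

context
  fixes L :: "'x::bounded_lattice set" and e :: "'x \<Rightarrow> 'c::{complete_lattice,boolean_algebra}"
  assumes L: "bounded_sublattice L" and e: "lattice_hom_on L e"
begin

lemma lc_pair_in_lc_joins: "p \<in> L \<times> L \<Longrightarrow> lc_pair e p \<in> lc_joins L e"
  unfolding lc_joins_def by (rule CollectI, rule exI[of _ "{p}"]) auto

lemma lc_joins_sup: "a \<in> lc_joins L e \<Longrightarrow> b \<in> lc_joins L e \<Longrightarrow> sup a b \<in> lc_joins L e"
proof -
  assume "a \<in> lc_joins L e" "b \<in> lc_joins L e"
  then obtain P Q where "finite P" "P \<subseteq> L \<times> L" "a = Sup (lc_pair e ` P)"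
    "finite Q" "Q \<subseteq> L \<times> L" "b = Sup (lc_pair e ` Q)" unfolding lc_joins_def by auto
  thus ?thesis unfolding lc_joins_def
    by (intro CollectI exI[of _ "P \<union> Q"]) (simp add: image_Un Sup_union_distrib)
qed

lemma lc_joins_inf: "a \<in> lc_joins L e \<Longrightarrow> b \<in> lc_joins L e \<Longrightarrow> inf a b \<in> lc_joins L e"
proof -
  assume "a \<in> lc_joins L e" "b \<in> lc_joins L e"
  then obtain P Q where PQ: "finite P" "P \<subseteq> L \<times> L" "a = Sup (lc_pair e ` P)"
    "finite Q" "Q \<subseteq> L \<times> L" "b = Sup (lc_pair e ` Q)" unfolding lc_joins_def by auto
  have "case_prod meet_pair ` (P \<times> Q) \<subseteq> L \<times> L"
  proof
    fix r assume "r \<in> case_prod meet_pair ` (P \<times> Q)"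
    then obtain p q where "p \<in> P" "q \<in> Q" "r = meet_pair p q" by auto
    thus "r \<in> L \<times> L" using PQ(2,5) meet_pair_closed[OF L] by blast
  qed
  thus ?thesis unfolding lc_joins_def Sup_lc_pair_meet_pair[OF e PQ(2,5)] PQ(3,6)
    using PQ by (intro CollectI exI[of _ "case_prod meet_pair ` (P \<times> Q)"]) simp
qed

lemma bot_in_lc_joins: "bot \<in> lc_joins L e"
  unfolding lc_joins_def by (rule CollectI, rule exI[of _ "{}"]) auto

lemma top_in_lc_joins: "top \<in> lc_joins L e"
  using lc_pair_in_lc_joins[of "(top, bot)"] L e
  by (simp add: bounded_sublattice_def lattice_hom_on_def lc_pair_def)

lemma lc_joins_compl: "a \<in> lc_joins L e \<Longrightarrow> - a \<in> lc_joins L e"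
proof -
  assume "a \<in> lc_joins L e"
  then obtain P where P: "finite P" "P \<subseteq> L \<times> L" "a = Sup (lc_pair e ` P)"
    unfolding lc_joins_def by auto
  have "- Sup (lc_pair e ` P) \<in> lc_joins L e" using P(1,2)
  proof (induction P rule: finite_induct)
    case empty thus ?case using top_in_lc_joins by simp
  next
    case (insert q P)
    obtain u v where uv: "q = (u, v)" "u \<in> L" "v \<in> L" using insert by (cases q) auto
    have "- lc_pair e q = sup (lc_pair e (top, u)) (lc_pair e (v, bot))"
      using e uv by (simp add: lc_pair_def lattice_hom_on_def)
    hence "- lc_pair e q \<in> lc_joins L e"
      using L uv lc_joins_sup lc_pair_in_lc_joins by (simp add: bounded_sublattice_def)
    thus ?case using insert lc_joins_inf by simp
  qed
  thus "- a \<in> lc_joins L e" using P by simp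
qed

lemma benv_eq_lc_joins: "benv L e = lc_joins L e"
proof
  have "bool_closed (lc_joins L e)" unfolding bool_closed_def
    using top_in_lc_joins bot_in_lc_joins lc_joins_sup lc_joins_inf lc_joins_compl by blast
  moreover have "e w \<in> lc_joins L e" if "w \<in> L" for w
    using lc_pair_in_lc_joins[of "(w, bot)"] lc_pair_bot[OF e] that L
    by (simp add: bounded_sublattice_def)
  ultimately show "benv L e \<subseteq> lc_joins L e"
    unfolding benv_def by (intro bool_gen_least) auto
  have closed: "bool_closed (benv L e)" "e ` L \<subseteq> benv L e"
    unfolding benv_def by (rule bool_gen_closed)+
  have "Sup (lc_pair e ` P) \<in> benv L e" if "finite P" "P \<subseteq> L \<times> L" for P
    using that
  proof (induction P rule: finite_induct)
    case (insert q P)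
    hence "e (fst q) \<in> benv L e" "e (snd q) \<in> benv L e" using closed(2) by auto
    hence "lc_pair e q \<in> benv L e" using closed(1) unfolding lc_pair_def bool_closed_def by blast
    thus ?case using insert closed(1) unfolding bool_closed_def by simp
  qed (use closed in \<open>simp add: bool_closed_def\<close>)
  thus "lc_joins L e \<subseteq> benv L e" unfolding lc_joins_def by blast
qed

end

lemma bool_hom_on_eq_on_bool_gen:
  assumes "bool_hom_on (bool_gen X) g1" "bool_hom_on (bool_gen X) g2" "\<forall>x\<in>X. g1 x = g2 x"
    and "b \<in> bool_gen X"
  shows "g1 b = g2 b"
proof -
  let ?B = "{b \<in> bool_gen X. g1 b = g2 b}"
  have "X \<subseteq> ?B" "bool_closed ?B"
    using assms(1-3) bool_gen_closed[of X] unfolding bool_closed_def bool_hom_on_def by auto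
  hence "bool_gen X \<subseteq> ?B" by (rule bool_gen_least)
  thus ?thesis using assms(4) by blast
qed

section \<open>The proximity morphism induced by a frame morphism\<close>

definition opens_embedding ::
  "('m::{complete_lattice,boolean_algebra} \<Rightarrow> 'm) \<Rightarrow> 'x::complete_lattice set \<Rightarrow> ('x \<Rightarrow> 'm) \<Rightarrow> bool" where
  "opens_embedding box L e \<longleftrightarrow> MT_algebra box \<and> frame_on L \<and> lattice_hom_on L e \<and>
     order_embedding_on L e \<and> (\<forall>S. S \<subseteq> L \<longrightarrow> e (Sup S) = Sup (e ` S)) \<and> opens box = e ` L"

text \<open>F h described without the boolean extension B h (see Fmor_eq_prox_ext); it makes sense
  for any MT-algebras whose frames of opens are identified with L1 and L2.\<close>

definition prox_ext ::
  "'x::complete_lattice set \<Rightarrow> ('x \<Rightarrow> 'c::{complete_lattice,boolean_algebra}) \<Rightarrow>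
   ('y \<Rightarrow> 'd::{complete_lattice,boolean_algebra}) \<Rightarrow> ('x \<Rightarrow> 'y) \<Rightarrow> 'c \<Rightarrow> 'd" where
  "prox_ext L1 e1 e2 h a = Sup ((\<lambda>p. lc_pair e2 (map_prod h h p)) ` {p \<in> L1 \<times> L1. lc_pair e1 p \<le> a})"

lemma opens_embeddingD:
  assumes "opens_embedding box L e"
  shows "MT_algebra box" "frame_on L" "lattice_hom_on L e" "order_embedding_on L e"
    "bounded_sublattice L" "S \<subseteq> L \<Longrightarrow> e (Sup S) = Sup (e ` S)" "opens box = e ` L"
  using assms frame_bounded_sublattice unfolding opens_embedding_def by auto

lemma opens_embedding_LC:
  assumes "opens_embedding box L e"
  shows "LC box = lc_pair e ` (L \<times> L)"
  unfolding LC_eq_opens_diff[OF opens_embeddingD(1)[OF assms]] opens_embeddingD(7)[OF assms]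
proof (intro set_eqI iffI)
  fix x assume "x \<in> {inf u (- v) | u v. u \<in> e ` L \<and> v \<in> e ` L}"
  then obtain a b where "a \<in> L" "b \<in> L" "x = lc_pair e (a, b)" by (auto simp: lc_pair_def)
  thus "x \<in> lc_pair e ` (L \<times> L)" by auto
qed (fastforce simp: lc_pair_def)

lemma opens_embedding_id: "MT_algebra box \<Longrightarrow> opens_embedding box (opens box) id"
  unfolding opens_embedding_def
  by (auto simp: opens_frame lattice_hom_on_def order_embedding_on_def)

context
  fixes box1 :: "'m::{complete_lattice,boolean_algebra} \<Rightarrow> 'm"
    and box2 :: "'n::{complete_lattice,boolean_algebra} \<Rightarrow> 'n"
    and L1 :: "'x::complete_lattice set" and L2 :: "'y::complete_lattice set"
    and e1 :: "'x \<Rightarrow> 'm" and e2 :: "'y \<Rightarrow> 'n" and h :: "'x \<Rightarrow> 'y"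
  assumes E1: "opens_embedding box1 L1 e1" and E2: "opens_embedding box2 L2 e2"
    and h: "frame_hom L1 L2 h"
begin

private abbreviation (input) "G \<equiv> prox_ext L1 e1 e2 h"

private lemma h_lattice_hom: "lattice_hom_on L1 h" "h ` L1 \<subseteq> L2"
  using frame_hom_lattice_hom[OF opens_embeddingD(2)[OF E1] h] h by (auto simp: frame_hom_def)

lemma prox_ext_mono: "a \<le> b \<Longrightarrow> G a \<le> G b"
  unfolding prox_ext_def by (rule Sup_subset_mono) auto

lemma prox_ext_lc_joins:
  assumes "finite P" "P \<subseteq> L1 \<times> L1"
  shows "G (Sup (lc_pair e1 ` P)) = Sup (lc_pair e2 ` map_prod h h ` P)"
proof (rule antisym)
  show "G (Sup (lc_pair e1 ` P)) \<le> Sup (lc_pair e2 ` map_prod h h ` P)"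
    unfolding prox_ext_def
  proof (rule SUP_least)
    fix q assume "q \<in> {q \<in> L1 \<times> L1. lc_pair e1 q \<le> Sup (lc_pair e1 ` P)}"
    hence "Sup (lc_pair e2 ` map_prod h h ` {q}) \<le> Sup (lc_pair e2 ` map_prod h h ` P)"
      using assms by (intro Sup_lc_pair_le_transfer[OF opens_embeddingD(5,3,4)[OF E1]
          h_lattice_hom opens_embeddingD(3)[OF E2]]) auto
    thus "lc_pair e2 (map_prod h h q) \<le> Sup (lc_pair e2 ` map_prod h h ` P)" by simp
  qed
  show "Sup (lc_pair e2 ` map_prod h h ` P) \<le> G (Sup (lc_pair e1 ` P))"
    unfolding prox_ext_def image_image using assms(2)
    by (intro Sup_subset_mono image_mono) (auto intro: SUP_upper)
qed

lemma prox_ext_lc_pair: "p \<in> L1 \<times> L1 \<Longrightarrow> G (lc_pair e1 p) = lc_pair e2 (map_prod h h p)"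
  using prox_ext_lc_joins[of "{p}"] by simp

lemma prox_ext_open: "w \<in> L1 \<Longrightarrow> G (e1 w) = e2 (h w)"
  using prox_ext_lc_pair[of "(w, bot)"] opens_embeddingD(3,5)[OF E1] h_lattice_hom
    lc_pair_bot[OF opens_embeddingD(3)[OF E2]] lc_pair_bot[OF opens_embeddingD(3)[OF E1]]
  by (auto simp: bounded_sublattice_def lattice_hom_on_def)

lemma prox_ext_frame_hom: "frame_hom (opens box1) (opens box2) G"
  unfolding frame_hom_def
proof (intro conjI ballI allI impI)
  note D1 = opens_embeddingD[OF E1] and D2 = opens_embeddingD[OF E2]
  fix x assume "x \<in> opens box1"
  thus "G x \<in> opens box2" using D1(7) D2(7) prox_ext_open h_lattice_hom(2) by auto
next
  note D1 = opens_embeddingD[OF E1] and D2 = opens_embeddingD[OF E2]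
  show "G top = top"
    using prox_ext_open[of top] D1(3,5) D2(3) h_lattice_hom(1)
    by (simp add: lattice_hom_on_def bounded_sublattice_def)
  fix a b assume "a \<in> opens box1" "b \<in> opens box1"
  then obtain u v where uv: "u \<in> L1" "v \<in> L1" "a = e1 u" "b = e1 v" using D1(7) by auto
  hence "inf a b = e1 (inf u v)" "inf u v \<in> L1"
    using D1(3,5) by (auto simp: lattice_hom_on_def bounded_sublattice_def)
  moreover have "h u \<in> L2" "h v \<in> L2" using uv h_lattice_hom(2) by auto
  ultimately show "G (inf a b) = inf (G a) (G b)"
    using uv D2(3) h_lattice_hom(1) prox_ext_open by (auto simp: lattice_hom_on_def)
next
  note D1 = opens_embeddingD[OF E1] and D2 = opens_embeddingD[OF E2]
  fix S assume "S \<subseteq> opens box1"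
  then obtain T where T: "T \<subseteq> L1" "S = e1 ` T" using D1(7) by (auto simp: subset_image_iff)
  have "Sup T \<in> L1" using D1(2) T by (simp add: frame_on_def)
  have "Sup S = e1 (Sup T)" using T D1(6) by simp
  hence "G (Sup S) = e2 (h (Sup T))" using prox_ext_open \<open>Sup T \<in> L1\<close> by simp
  also have "\<dots> = Sup (e2 ` h ` T)"
    using T h h_lattice_hom(2) D2(6)[of "h ` T"] by (auto simp: frame_hom_def)
  also have "\<dots> = Sup (G ` S)" using T prox_ext_open by (simp add: image_image subset_iff)
  finally show "G (Sup S) = Sup (G ` S)" .
qed

lemma prox_ext_inf: "G (inf a b) = inf (G a) (G b)"
proof (rule antisym)
  show "G (inf a b) \<le> inf (G a) (G b)" using prox_ext_mono by simp
  let ?f = "\<lambda>p. lc_pair e2 (map_prod h h p)"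
  have "inf (G a) (G b) = Sup ((\<lambda>(p,q). inf (?f p) (?f q)) `
         ({p \<in> L1 \<times> L1. lc_pair e1 p \<le> a} \<times> {q \<in> L1 \<times> L1. lc_pair e1 q \<le> b}))"
    unfolding prox_ext_def by (rule inf_Sup_Sup_boolean)
  also have "\<dots> \<le> G (inf a b)"
  proof (rule SUP_least)
    fix pq assume "pq \<in> {p \<in> L1 \<times> L1. lc_pair e1 p \<le> a} \<times> {q \<in> L1 \<times> L1. lc_pair e1 q \<le> b}"
    then obtain p q where pq: "pq = (p, q)" and p: "p \<in> L1 \<times> L1" "lc_pair e1 p \<le> a"
      and q: "q \<in> L1 \<times> L1" "lc_pair e1 q \<le> b" by (cases pq) auto
    have "lc_pair e1 (meet_pair p q) \<le> inf a b"
      using lc_pair_meet_pair[OF opens_embeddingD(3)[OF E1] p(1) q(1)] p q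
      by (auto intro: le_infI1 le_infI2)
    moreover have "map_prod h h p \<in> L2 \<times> L2" "map_prod h h q \<in> L2 \<times> L2"
      using p(1) q(1) h_lattice_hom(2) by (auto simp: mem_Times_iff)
    hence "inf (?f p) (?f q) = ?f (meet_pair p q)"
      using lc_pair_meet_pair[OF opens_embeddingD(3)[OF E2]]
        map_prod_meet_pair[OF h_lattice_hom(1) p(1) q(1)] by simp
    ultimately show "(\<lambda>(p,q). inf (?f p) (?f q)) pq \<le> G (inf a b)"
      unfolding prox_ext_def pq using meet_pair_closed[OF opens_embeddingD(5)[OF E1] p(1) q(1)]
      by (auto intro!: SUP_upper)
  qed
  finally show "inf (G a) (G b) \<le> G (inf a b)" .
qed

lemma prox_ext_proximity: "proximity box1 box2 G"
  unfolding proximity_def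
proof (intro conjI allI impI prox_ext_frame_hom prox_ext_inf)
  fix S assume S: "finite S \<and> S \<subseteq> LC box1"
  then obtain P where P: "P \<subseteq> L1 \<times> L1" "finite P" "S = lc_pair e1 ` P"
    using opens_embedding_LC[OF E1] by (metis finite_subset_image)
  show "G (Sup S) = Sup (G ` S)"
    using P prox_ext_lc_joins prox_ext_lc_pair by (auto simp: image_image subset_iff
        intro!: arg_cong[where f = Sup] image_cong)
next
  fix a
  have "{G x | x. x \<in> LC box1 \<and> x \<le> a} =
        (\<lambda>p. lc_pair e2 (map_prod h h p)) ` {p \<in> L1 \<times> L1. lc_pair e1 p \<le> a}"
    unfolding opens_embedding_LC[OF E1] using prox_ext_lc_pair by force
  thus "G a = Sup {G x | x. x \<in> LC box1 \<and> x \<le> a}" by (simp add: prox_ext_def)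
qed

lemma prox_ext_bool_hom_on: "bool_hom_on (lc_joins L1 e1) G"
proof -
  note L = opens_embeddingD(5,3)[OF E1]
  have join: "a \<in> lc_joins L1 e1 \<Longrightarrow> b \<in> lc_joins L1 e1 \<Longrightarrow> G (sup a b) = sup (G a) (G b)" for a b
    unfolding lc_joins_def
    by (clarsimp simp flip: Sup_union_distrib image_Un simp: prox_ext_lc_joins)
  have top: "G top = top" and bot: "G bot = bot"
    using prox_ext_frame_hom prox_ext_lc_joins[of "{}"] by (auto simp: frame_hom_def)
  have "G (- a) = - G a" if "a \<in> lc_joins L1 e1" for a
  proof (rule compl_unique[symmetric])
    show "inf (G a) (G (- a)) = bot" using bot by (simp flip: prox_ext_inf)
    show "sup (G a) (G (- a)) = top" using top that lc_joins_compl[OF L] by (simp flip: join)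
  qed
  thus ?thesis unfolding bool_hom_on_def using top bot prox_ext_inf join by blast
qed

end

lemma prox_ext_id:
  assumes "opens_embedding box L e"
  shows "prox_ext L e e id = idP box"
proof
  fix a
  have "{x. x \<in> LC box \<and> x \<le> a} = lc_pair e ` {p \<in> L \<times> L. lc_pair e p \<le> a}"
    using opens_embedding_LC[OF assms] by auto
  thus "prox_ext L e e id a = idP box a" unfolding prox_ext_def idP_def by (simp add: map_prod.id)
qed

lemma frame_hom_comp:
  assumes "frame_hom L1 L2 h" "frame_hom L2 L3 k"
  shows "frame_hom L1 L3 (k \<circ> h)"
proof -
  have "k (h (Sup S)) = Sup ((k \<circ> h) ` S)" if "S \<subseteq> L1" for S
  proof -
    have "h (Sup S) = Sup (h ` S)" "h ` S \<subseteq> L2" using assms(1) that by (auto simp: frame_hom_def)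
    thus ?thesis using assms(2) by (simp add: frame_hom_def image_comp)
  qed
  thus ?thesis using assms unfolding frame_hom_def by auto
qed

lemma prox_ext_comp:
  assumes E1: "opens_embedding box1 L1 e1" and E2: "opens_embedding box2 L2 e2"
    and E3: "opens_embedding box3 L3 e3" and h: "frame_hom L1 L2 h" and k: "frame_hom L2 L3 k"
  shows "prox_ext L1 e1 e3 (k \<circ> h) = compP box1 (prox_ext L2 e2 e3 k) (prox_ext L1 e1 e2 h)"
proof
  fix a
  have "{prox_ext L2 e2 e3 k (prox_ext L1 e1 e2 h x) | x. x \<in> LC box1 \<and> x \<le> a}
      = (\<lambda>p. lc_pair e3 (map_prod (k \<circ> h) (k \<circ> h) p)) ` {p \<in> L1 \<times> L1. lc_pair e1 p \<le> a}"
  proof -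
    have "prox_ext L2 e2 e3 k (prox_ext L1 e1 e2 h (lc_pair e1 p))
        = lc_pair e3 (map_prod (k \<circ> h) (k \<circ> h) p)" if "p \<in> L1 \<times> L1" for p
      using that h prox_ext_lc_pair[OF E1 E2 h] prox_ext_lc_pair[OF E2 E3 k]
      by (cases p) (auto simp: frame_hom_def)
    thus ?thesis unfolding opens_embedding_LC[OF E1] by force
  qed
  thus "prox_ext L1 e1 e3 (k \<circ> h) a = compP box1 (prox_ext L2 e2 e3 k) (prox_ext L1 e1 e2 h) a"
    unfolding compP_def prox_ext_def by simp
qed

lemma compP_cong:
  "(\<And>x. x \<in> LC box \<Longrightarrow> g1 (f1 x) = g2 (f2 x)) \<Longrightarrow> compP box g1 f1 = compP box g2 f2"
  unfolding compP_def by (rule ext, rule arg_cong[where f = Sup]) (metis (no_types, lifting))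

lemma compP_eq_idP:
  "(\<And>x. x \<in> LC box \<Longrightarrow> g (f x) = x) \<Longrightarrow> compP box g f = idP box"
  unfolding compP_def idP_def by (rule ext, rule arg_cong[where f = Sup]) (metis (no_types, lifting))

lemma prox_ext_inverse:
  assumes "opens_embedding box1 L e1" "opens_embedding box2 L e2"
  shows "compP box1 (prox_ext L e2 e1 id) (prox_ext L e1 e2 id) = idP box1"
proof (rule compP_eq_idP)
  have hid: "frame_hom L L id" by (simp add: frame_hom_def)
  fix x assume "x \<in> LC box1"
  then obtain p where "p \<in> L \<times> L" "x = lc_pair e1 p" using opens_embedding_LC[OF assms(1)] by auto
  thus "prox_ext L e2 e1 id (prox_ext L e1 e2 id x) = x"
    using prox_ext_lc_pair[OF assms hid] prox_ext_lc_pair[OF assms(2,1) hid] by (simp add: map_prod.id)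
qed

section \<open>The Funayama envelope\<close>

context
  fixes L :: "'x::complete_lattice set" and e :: "'x \<Rightarrow> 'p::{complete_lattice,boolean_algebra}"
  assumes L: "frame_on L" and FD: "funayama_data L e"
begin

lemma funayama_lattice_hom: "lattice_hom_on L e"
  using FD unfolding funayama_data_def lattice_hom_on_def by auto

lemma funayama_order_embedding: "order_embedding_on L e"
  unfolding order_embedding_on_def
proof (intro ballI iffI)
  fix a b assume ab: "a \<in> L" "b \<in> L"
  show "a \<le> b \<Longrightarrow> e a \<le> e b" using lattice_hom_on_mono[OF funayama_lattice_hom ab] .
  assume "e a \<le> e b"
  hence "e (inf a b) = e a" using funayama_lattice_hom ab by (simp add: lattice_hom_on_def inf.absorb1)
  moreover have "inf a b \<in> L" using frame_bounded_sublattice[OF L] ab by (simp add: bounded_sublattice_def)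
  ultimately have "inf a b = a" using FD ab unfolding funayama_data_def inj_on_def by blast
  thus "a \<le> b" by (metis inf.cobounded2)
qed

lemma funayama_meet_dense: "Inf {b \<in> benv L e. x \<le> b} = x"
proof -
  have "\<forall>x. x = Inf {b \<in> benv L e. x \<le> b}" using FD unfolding funayama_data_def by (elim conjE)
  thus ?thesis by (rule allE) (rule sym)
qed

lemma inf_lc_pair_eq_bot_iff:
  assumes "s \<in> L" "u \<in> L" "v \<in> L"
  shows "inf (e s) (lc_pair e (u, v)) = bot \<longleftrightarrow> inf s u \<le> v"
proof -
  have "inf s u \<in> L" using frame_bounded_sublattice[OF L] assms by (simp add: bounded_sublattice_def)
  hence "inf s u \<le> v \<longleftrightarrow> e (inf s u) \<le> e v"
    using funayama_order_embedding assms by (simp add: order_embedding_on_def)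
  also have "\<dots> \<longleftrightarrow> inf (inf (e s) (e u)) (- e v) = bot"
    using funayama_lattice_hom assms by (simp add: lattice_hom_on_def inf_shunt)
  finally show ?thesis by (simp add: lc_pair_def inf_assoc)
qed

lemma inf_Sup_lc_pair_eq_bot:
  assumes "S \<subseteq> L" "u \<in> L" "v \<in> L" "\<And>s. s \<in> S \<Longrightarrow> inf (e s) (lc_pair e (u, v)) = bot"
  shows "inf (e (Sup S)) (lc_pair e (u, v)) = bot"
proof -
  have le: "inf s u \<le> v" if "s \<in> S" for s
    using assms that inf_lc_pair_eq_bot_iff[of s u v] by auto
  have "inf u (Sup S) = Sup ((inf u) ` S)" using L assms(1,2) unfolding frame_on_def by blast
  also have "\<dots> \<le> v" using le by (auto intro!: SUP_least simp: inf_commute)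
  finally have "inf (Sup S) u \<le> v" by (simp add: inf_commute)
  moreover have "Sup S \<in> L" using L assms(1) by (simp add: frame_on_def)
  ultimately show ?thesis using inf_lc_pair_eq_bot_iff assms(2,3) by simp
qed

text \<open>Meet-density reduces e (Sup S) \<le> b to the case b in the envelope; then -b
  is a finite join of pieces e u - e v, and disjointness from such a piece is the lattice
  inequality inf s u \<le> v, which passes to Sup S by frame distributivity.\<close>

lemma funayama_Sup:
  assumes S: "S \<subseteq> L"
  shows "e (Sup S) = Sup (e ` S)"
proof (rule antisym)
  have Sup_in: "Sup S \<in> L" using L S by (simp add: frame_on_def)
  show "Sup (e ` S) \<le> e (Sup S)"
    by (rule SUP_least, rule lattice_hom_on_mono[OF funayama_lattice_hom])
      (use S Sup_in in \<open>auto intro: Sup_upper\<close>)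
  have "e (Sup S) \<le> b" if b: "b \<in> benv L e" "Sup (e ` S) \<le> b" for b
  proof -
    have "- b \<in> lc_joins L e"
      using b(1) lc_joins_compl[OF frame_bounded_sublattice[OF L] funayama_lattice_hom]
      by (simp add: benv_eq_lc_joins[OF frame_bounded_sublattice[OF L] funayama_lattice_hom])
    then obtain P where P: "P \<subseteq> L \<times> L" "- b = Sup (lc_pair e ` P)" by (auto simp: lc_joins_def)
    have disjoint: "inf (e (Sup S)) (lc_pair e (u, v)) = bot" if p: "(u, v) \<in> P" for u v
    proof (rule inf_Sup_lc_pair_eq_bot[OF S])
      show "u \<in> L" "v \<in> L" using P p by auto
      fix s assume "s \<in> S"
      hence "e s \<le> b" using b(2) by (meson SUP_upper order_trans)
      moreover have "lc_pair e (u, v) \<le> - b" using P p by (auto intro: SUP_upper)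
      ultimately have "inf (e s) (lc_pair e (u, v)) \<le> inf b (- b)" by (rule inf_mono)
      thus "inf (e s) (lc_pair e (u, v)) = bot" by (simp add: bot_unique)
    qed
    have "inf (e (Sup S)) (- b) = bot"
      unfolding P(2) inf_Sup_boolean image_image using P(1) disjoint by auto
    thus ?thesis by (simp add: inf_shunt)
  qed
  hence "e (Sup S) \<le> Inf {b \<in> benv L e. Sup (e ` S) \<le> b}" by (auto intro: Inf_greatest)
  also have "\<dots> = Sup (e ` S)" by (rule funayama_meet_dense)
  finally show "e (Sup S) \<le> Sup (e ` S)" .
qed

text \<open>core extends the right adjoint radj from the boolean envelope to its completion.\<close>

definition core :: "'p \<Rightarrow> 'x" where
  "core a = Sup {w \<in> L. e w \<le> a}"

lemma core_in: "core a \<in> L"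
  using L unfolding core_def frame_on_def by auto

lemma core_le: "e (core a) \<le> a"
proof -
  have "e (core a) = Sup (e ` {w \<in> L. e w \<le> a})" unfolding core_def by (rule funayama_Sup) auto
  thus ?thesis by (auto intro: SUP_least)
qed

lemma le_core: "w \<in> L \<Longrightarrow> e w \<le> a \<Longrightarrow> w \<le> core a"
  unfolding core_def by (auto intro: Sup_upper)

lemma core_mono: "a \<le> c \<Longrightarrow> core a \<le> core c"
  by (rule le_core[OF core_in order_trans[OF core_le]])

lemma core_e:
  assumes "w \<in> L"
  shows "core (e w) = w"
proof (rule antisym)
  show "core (e w) \<le> w"
    using core_le[of "e w"] core_in assms funayama_order_embedding by (simp add: order_embedding_on_def)
  show "w \<le> core (e w)" using assms by (rule le_core) simp
qed

lemma funbox_eq_core: "funbox L e a = e (core a)"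
proof -
  have radj: "radj L e b = core b" for b
    unfolding radj_def by (rule the_equality) (auto intro: core_in core_le le_core antisym)
  have "e (core a) \<in> benv L e" using core_in bool_gen_closed(2) unfolding benv_def by blast
  hence "e (core a) \<le> funbox L e a" unfolding funbox_def
    by (intro Sup_upper CollectI exI[of _ "e (core a)"]) (simp add: radj core_e core_in core_le)
  moreover have "funbox L e a \<le> e (core a)" unfolding funbox_def
    by (auto intro!: Sup_least lattice_hom_on_mono[OF funayama_lattice_hom] core_in core_mono
        simp: radj)
  ultimately show ?thesis by simp
qed

lemma funbox_MT: "MT_algebra (funbox L e)"
  unfolding MT_algebra_def funbox_eq_core
proof (intro conjI allI)
  have "top \<in> L" using L by (simp add: frame_on_def)
  hence "core top = top" using le_core[of top top] by (simp add: top_unique)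
  thus "e (core top) = top" using funayama_lattice_hom by (simp add: lattice_hom_on_def)
  show "e (core a) \<le> a" for a by (rule core_le)
  show "e (core a) \<le> e (core (e (core a)))" for a by (simp add: core_e core_in)
  fix a b
  have inL: "inf (core a) (core b) \<in> L"
    and ei: "e (inf (core a) (core b)) = inf (e (core a)) (e (core b))"
    using frame_bounded_sublattice[OF L] funayama_lattice_hom core_in
    by (auto simp: bounded_sublattice_def lattice_hom_on_def)
  have "e (inf (core a) (core b)) \<le> inf a b" unfolding ei by (intro inf_mono core_le)
  hence "inf (core a) (core b) \<le> core (inf a b)" by (rule le_core[OF inL])
  hence "core (inf a b) = inf (core a) (core b)" using core_mono by (simp add: antisym)
  thus "e (core (inf a b)) = inf (e (core a)) (e (core b))" using ei by simp
qed

lemma funbox_opens: "opens (funbox L e) = e ` L"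
  unfolding opens_def funbox_eq_core
proof (intro set_eqI iffI)
  fix x assume "x \<in> {a. e (core a) = a}"
  thus "x \<in> e ` L" using core_in by (metis (mono_tags) image_eqI mem_Collect_eq)
qed (auto simp: core_e)

lemma funbox_opens_embedding: "opens_embedding (funbox L e) L e"
  unfolding opens_embedding_def
  using funbox_MT L funayama_lattice_hom funayama_order_embedding funayama_Sup funbox_opens by blast

end

lemma Fmor_eq_prox_ext:
  assumes L: "frame_on L" "funayama_data L e" and L': "frame_on L'" "funayama_data L' e'"
    and h: "frame_hom L L' h"
  shows "Fmor L e e' h = prox_ext L e e' h"
proof
  note E = funbox_opens_embedding[OF L] and E' = funbox_opens_embedding[OF L']
  have benv: "benv L e = lc_joins L e"
    by (rule benv_eq_lc_joins[OF frame_bounded_sublattice[OF L(1)] funayama_lattice_hom[OF L]])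
  have ext: "bool_hom_on (benv L e) (prox_ext L e e' h) \<and> (\<forall>x\<in>L. prox_ext L e e' h (e x) = e' (h x))"
    using prox_ext_bool_hom_on[OF E E' h] prox_ext_open[OF E E' h] benv by auto
  hence "\<exists>g. bool_hom_on (benv L e) g \<and> (\<forall>x\<in>L. g (e x) = e' (h x))" by blast
  hence "bool_hom_on (benv L e) (Bmor L e e' h) \<and> (\<forall>x\<in>L. Bmor L e e' h (e x) = e' (h x))"
    unfolding Bmor_def by (rule someI_ex)
  hence Bmor: "Bmor L e e' h b = prox_ext L e e' h b" if "b \<in> benv L e" for b
    using bool_hom_on_eq_on_bool_gen[of "e ` L" "Bmor L e e' h" "prox_ext L e e' h" b] ext that
    unfolding benv_def by auto
  fix a
  have "LC (funbox L e) \<subseteq> benv L e"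
    using lc_pair_in_lc_joins[OF frame_bounded_sublattice[OF L(1)] funayama_lattice_hom[OF L]]
    by (auto simp: opens_embedding_LC[OF E] benv)
  hence "prox_ext L e e' h a \<le> Fmor L e e' h a"
    unfolding proximityD(4)[OF prox_ext_proximity[OF E E' h], of a] Fmor_def
    using Bmor by (fastforce intro!: Sup_mono)
  moreover have "Fmor L e e' h a \<le> prox_ext L e e' h a"
    unfolding Fmor_def using Bmor prox_ext_mono[OF E E' h] by (auto intro!: Sup_least)
  ultimately show "Fmor L e e' h a = prox_ext L e e' h a" by simp
qed

lemma idP_opens: "MT_algebra box \<Longrightarrow> a \<in> opens box \<Longrightarrow> idP box a = a"
  unfolding idP_def by (rule antisym) (auto intro: Sup_least Sup_upper opens_subset_LC)

lemma compP_opens: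
  assumes "MT_algebra box1" "proximity box1 box2 f" "proximity box2 box3 g" "a \<in> opens box1"
  shows "compP box1 g f a = g (f a)"
  unfolding compP_def
  by (rule antisym, rule Sup_least)
    (auto intro!: Sup_upper proximity_mono[OF assms(3)] proximity_mono[OF assms(2)]
      opens_subset_LC(1)[OF assms(1,4)])

lemma Fmor_proximity:
  assumes "frame_on L1" "funayama_data L1 e1" "frame_on L2" "funayama_data L2 e2" "frame_hom L1 L2 h"
  shows "proximity (funbox L1 e1) (funbox L2 e2) (Fmor L1 e1 e2 h)"
  unfolding Fmor_eq_prox_ext[OF assms]
  by (rule prox_ext_proximity[OF funbox_opens_embedding[OF assms(1,2)]
        funbox_opens_embedding[OF assms(3,4)] assms(5)])

lemma Fmor_id:
  assumes "frame_on L" "funayama_data L e"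
  shows "Fmor L e e id = idP (funbox L e)"
  using Fmor_eq_prox_ext[OF assms assms] prox_ext_id[OF funbox_opens_embedding[OF assms]]
  by (simp add: frame_hom_def)

lemma Fmor_comp:
  assumes "frame_on L1" "funayama_data L1 e1" "frame_on L2" "funayama_data L2 e2"
    "frame_on L3" "funayama_data L3 e3" "frame_hom L1 L2 h" "frame_hom L2 L3 k"
  shows "Fmor L1 e1 e3 (k \<circ> h) = compP (funbox L1 e1) (Fmor L2 e2 e3 k) (Fmor L1 e1 e2 h)"
  unfolding Fmor_eq_prox_ext[OF assms(1-4,7)] Fmor_eq_prox_ext[OF assms(3-6,8)]
    Fmor_eq_prox_ext[OF assms(1,2,5,6) frame_hom_comp[OF assms(7,8)]]
  by (rule prox_ext_comp[OF funbox_opens_embedding[OF assms(1,2)]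
        funbox_opens_embedding[OF assms(3,4)] funbox_opens_embedding[OF assms(5,6)] assms(7,8)])

lemma Fmor_on_opens:
  assumes "frame_on L1" "funayama_data L1 e1" "frame_on L2" "funayama_data L2 e2"
    "frame_hom L1 L2 h" "x \<in> L1"
  shows "Fmor L1 e1 e2 h (e1 x) = e2 (h x)"
  unfolding Fmor_eq_prox_ext[OF assms(1-5)]
  by (rule prox_ext_open[OF funbox_opens_embedding[OF assms(1,2)]
        funbox_opens_embedding[OF assms(3,4)] assms(5,6)])

lemma funayama_frame_iso:
  assumes "frame_on L" "funayama_data L e"
  shows "frame_iso L (opens (funbox L e)) e"
proof -
  note D = opens_embeddingD[OF funbox_opens_embedding[OF assms]]
  have "frame_hom L (e ` L) e" unfolding frame_hom_def
    using D(3,5,6) by (auto simp: lattice_hom_on_def bounded_sublattice_def)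
  moreover have "inj_on e L" using assms(2) by (simp add: funayama_data_def)
  ultimately show ?thesis unfolding frame_iso_def D(7) by (simp add: bij_betw_def)
qed

lemma MT_proximity_iso_funayama:
  assumes "MT_algebra box" "funayama_data (opens box) e"
  shows "\<exists>\<psi> \<phi>. proximity box (funbox (opens box) e) \<psi> \<and> (\<forall>a\<in>opens box. \<psi> a = e a) \<and>
              proximity (funbox (opens box) e) box \<phi> \<and>
              compP box \<phi> \<psi> = idP box \<and>
              compP (funbox (opens box) e) \<psi> \<phi> = idP (funbox (opens box) e)"
proof -
  note E = opens_embedding_id[OF assms(1)]
    and E' = funbox_opens_embedding[OF opens_frame[OF assms(1)] assms(2)]
  have hid: "frame_hom (opens box) (opens box) id" by (simp add: frame_hom_def)
  show ?thesis
    using prox_ext_proximity[OF E E' hid] prox_ext_open[OF E E' hid] prox_ext_proximity[OF E' E hid]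
      prox_ext_inverse[OF E E'] prox_ext_inverse[OF E' E] by auto
qed

lemma funayama_unit_natural:
  assumes M1: "MT_algebra box1" "funayama_data (opens box1) e1"
    and M2: "MT_algebra box2" "funayama_data (opens box2) e2"
    and f: "proximity box1 box2 f"
    and \<psi>1: "proximity box1 (funbox (opens box1) e1) \<psi>1" "\<forall>a\<in>opens box1. \<psi>1 a = e1 a"
    and \<psi>2: "proximity box2 (funbox (opens box2) e2) \<psi>2" "\<forall>a\<in>opens box2. \<psi>2 a = e2 a"
  shows "compP box1 \<psi>2 f = compP box1 (Fmor (opens box1) e1 e2 f) \<psi>1"
proof (rule compP_cong)
  fix x assume "x \<in> LC box1"
  then obtain u v where uv: "u \<in> opens box1" "v \<in> opens box1" "x = inf u (- v)"
    unfolding LC_eq_opens_diff[OF M1(1)] by blast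
  have fh: "frame_hom (opens box1) (opens box2) f" by (rule proximityD(1)[OF f])
  hence fo: "f u \<in> opens box2" "f v \<in> opens box2" using uv by (auto simp: frame_hom_def)
  have "Fmor (opens box1) e1 e2 f (\<psi>1 x) = lc_pair e2 (f u, f v)"
    using prox_ext_lc_pair[OF funbox_opens_embedding[OF opens_frame[OF M1(1)] M1(2)]
        funbox_opens_embedding[OF opens_frame[OF M2(1)] M2(2)] fh, of "(u, v)"]
      proximity_diff_open[OF M1(1) \<psi>1(1) uv(1,2)] \<psi>1(2) uv
    by (simp add: Fmor_eq_prox_ext[OF opens_frame[OF M1(1)] M1(2) opens_frame[OF M2(1)] M2(2) fh]
        lc_pair_def)
  also have "\<dots> = \<psi>2 (f x)"
    using proximity_diff_open[OF M1(1) f uv(1,2)] proximity_diff_open[OF M2(1) \<psi>2(1) fo] \<psi>2(2) fo uv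
    by (simp add: lc_pair_def)
  finally show "\<psi>2 (f x) = Fmor (opens box1) e1 e2 f (\<psi>1 x)" by simp
qed

theorem theorem4p13:
  shows
  \<comment> \<open>O is a well-defined functor MT_P \<rightarrow> Frm\<close>
  "(\<forall>box :: 'm::{complete_lattice,boolean_algebra} \<Rightarrow> 'm.
       MT_algebra box \<longrightarrow> frame_on (opens box))
   \<and> (\<forall>(box1 :: 'm \<Rightarrow> 'm) (box2 :: 'n::{complete_lattice,boolean_algebra} \<Rightarrow> 'n) f.
       MT_algebra box1 \<and> MT_algebra box2 \<and> proximity box1 box2 f \<longrightarrow>
       frame_hom (opens box1) (opens box2) f)
   \<and> (\<forall>box :: 'm \<Rightarrow> 'm. MT_algebra box \<longrightarrow> (\<forall>a\<in>opens box. idP box a = a))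
   \<and> (\<forall>(box1 :: 'm \<Rightarrow> 'm) (box2 :: 'n \<Rightarrow> 'n) (box3 :: 'k::{complete_lattice,boolean_algebra} \<Rightarrow> 'k) f g.
       MT_algebra box1 \<and> MT_algebra box2 \<and> MT_algebra box3 \<and>
       proximity box1 box2 f \<and> proximity box2 box3 g \<longrightarrow>
       (\<forall>a\<in>opens box1. compP box1 g f a = g (f a)))
  \<comment> \<open>F is a well-defined functor Frm \<rightarrow> MT_P\<close>
   \<and> (\<forall>(L :: 'x::complete_lattice set) (e :: 'x \<Rightarrow> 'p::{complete_lattice,boolean_algebra}).
       frame_on L \<and> funayama_data L e \<longrightarrow>
       MT_algebra (funbox L e) \<and> opens (funbox L e) = e ` L)
   \<and> (\<forall>(L1 :: 'x set) (e1 :: 'x \<Rightarrow> 'p) (L2 :: 'y::complete_lattice set)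
        (e2 :: 'y \<Rightarrow> 'q::{complete_lattice,boolean_algebra}) h.
       frame_on L1 \<and> funayama_data L1 e1 \<and> frame_on L2 \<and> funayama_data L2 e2 \<and>
       frame_hom L1 L2 h \<longrightarrow>
       proximity (funbox L1 e1) (funbox L2 e2) (Fmor L1 e1 e2 h))
   \<and> (\<forall>(L :: 'x set) (e :: 'x \<Rightarrow> 'p).
       frame_on L \<and> funayama_data L e \<longrightarrow> Fmor L e e id = idP (funbox L e))
   \<and> (\<forall>(L1 :: 'x set) (e1 :: 'x \<Rightarrow> 'p) (L2 :: 'y set) (e2 :: 'y \<Rightarrow> 'q)
        (L3 :: 'z::complete_lattice set) (e3 :: 'z \<Rightarrow> 'r::{complete_lattice,boolean_algebra}) h k.
       frame_on L1 \<and> funayama_data L1 e1 \<and> frame_on L2 \<and> funayama_data L2 e2 \<and>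
       frame_on L3 \<and> funayama_data L3 e3 \<and> frame_hom L1 L2 h \<and> frame_hom L2 L3 k \<longrightarrow>
       Fmor L1 e1 e3 (k \<circ> h) = compP (funbox L1 e1) (Fmor L2 e2 e3 k) (Fmor L1 e1 e2 h))
  \<comment> \<open>natural isomorphism Id_Frm \<cong> O \<circ> F, with components e : L \<rightarrow> O(F L)\<close>
   \<and> (\<forall>(L :: 'x set) (e :: 'x \<Rightarrow> 'p).
       frame_on L \<and> funayama_data L e \<longrightarrow> frame_iso L (opens (funbox L e)) e)
   \<and> (\<forall>(L1 :: 'x set) (e1 :: 'x \<Rightarrow> 'p) (L2 :: 'y set) (e2 :: 'y \<Rightarrow> 'q) h.
       frame_on L1 \<and> funayama_data L1 e1 \<and> frame_on L2 \<and> funayama_data L2 e2 \<and>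
       frame_hom L1 L2 h \<longrightarrow>
       (\<forall>x\<in>L1. Fmor L1 e1 e2 h (e1 x) = e2 (h x)))
  \<comment> \<open>natural isomorphism Id_MT_P \<cong> F \<circ> O: each M is isomorphic in MT_P to F(O M) via a
      proximity isomorphism acting as e on open elements, and these components are natural\<close>
   \<and> (\<forall>(box :: 'm \<Rightarrow> 'm) (e :: 'm \<Rightarrow> 'p).
       MT_algebra box \<and> funayama_data (opens box) e \<longrightarrow>
       (\<exists>\<psi> \<phi>. proximity box (funbox (opens box) e) \<psi> \<and> (\<forall>a\<in>opens box. \<psi> a = e a) \<and>
              proximity (funbox (opens box) e) box \<phi> \<and>
              compP box \<phi> \<psi> = idP box \<and>
              compP (funbox (opens box) e) \<psi> \<phi> = idP (funbox (opens box) e)))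
   \<and> (\<forall>(box1 :: 'm \<Rightarrow> 'm) (box2 :: 'n \<Rightarrow> 'n) (e1 :: 'm \<Rightarrow> 'p) (e2 :: 'n \<Rightarrow> 'q) f \<psi>1 \<psi>2.
       MT_algebra box1 \<and> MT_algebra box2 \<and>
       funayama_data (opens box1) e1 \<and> funayama_data (opens box2) e2 \<and>
       proximity box1 box2 f \<and>
       proximity box1 (funbox (opens box1) e1) \<psi>1 \<and> (\<forall>a\<in>opens box1. \<psi>1 a = e1 a) \<and>
       proximity box2 (funbox (opens box2) e2) \<psi>2 \<and> (\<forall>a\<in>opens box2. \<psi>2 a = e2 a) \<longrightarrow>
       compP box1 \<psi>2 f = compP box1 (Fmor (opens box1) e1 e2 f) \<psi>1)"
  by (intro conjI allI impI ballI; (elim conjE)?;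
      rule opens_frame proximityD(1) idP_opens compP_opens funbox_MT funbox_opens Fmor_proximity
        Fmor_id Fmor_comp funayama_frame_iso Fmor_on_opens MT_proximity_iso_funayama
        funayama_unit_natural;
      assumption)

end
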